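(* Let $\gamma$ be a closed path in a reduced Rauzy diagram whose associated matrix $V(\gamma)$ is primitive. Assume there is a lift $\hat\gamma$ of $\gamma$ in the labeled Rauzy diagram that contains every letter of the alphabet as loser, or contains every letter as winner. Then the Perron–Frobenius eigenvalue of $V(\gamma)$ is at least $2$.
   Context: Fix a finite alphabet $\mathcal A$ with $d\ge2$ letters. A labeled permutation is a pair $\pi=(\pi_t,\pi_b)$ of bijections $\mathcal A\to\{1,\dots,d\}$. The Rauzy moves are: $\mathcal R_t(\pi)=(\pi_t,\pi_b')$ where, with $k$ such that $\pi_b^{-1}(k)=\pi_t^{-1}(d)$, $\pi_b'^{-1}(j)=\pi_b^{-1}(j)$ for $j\le k$, $\pi_b'^{-1}(k+1)=\pi_b^{-1}(d)$, $\pi_b'^{-1}(j)=\pi_b^{-1}(j-1)$ for $j>k+1$; its winner is $\pi_t^{-1}(d)$ and loser $\pi_b^{-1}(d)$. Symmetrically $\mathcal R_b(\pi)=(\pi_t',\pi_b)$ with the roles of $t,b$ exchanged; its winner is $\pi_b^{-1}(d)$ and loser $\pi_t^{-1}(d)$. The labeled Rauzy diagram of an (irreducible) $\pi$ is the directed graph whose vertices are all labeled permutations obtainable from $\pi$ by Rauzy moves and whose edges $\pi\xrightarrow{\alpha,\beta}\pi'$ are the moves, labeled by winner $\alpha$ and loser $\beta$. A path contains a letter as winner (loser) if one of its edges has that letter as winner (loser). To a labeled path with successive winner/loser pairs $(\alpha_k,\beta_k)_{k=1}^n$ one associates $\hat V=\prod_{k=1}^n(I+E_{\alpha_k\beta_k})$,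 where $E_{\alpha\beta}$ is the elementary matrix with a single $1$ in position $(\alpha,\beta)$. The reduced Rauzy diagram is obtained by identifying labeled permutations $(\pi_t,\pi_b),(\pi_t',\pi_b')$ with $\pi_b\circ\pi_t^{-1}=\pi_b'\circ\pi_t'^{-1}$; the labeled diagram covers it. For a closed path $\gamma$ in the reduced diagram, take its lift $\hat\gamma$ starting at the labeled representative with $\pi_t=\mathrm{Id}$ (alphabet $\{1,\dots,d\}$), ending at some $(\pi_t',\pi_b')$; then $V(\gamma)=\hat V(\hat\gamma)\,P$ where $P=[p_{ij}]$ with $p_{ij}=1$ iff $j=\pi_t'(i)$ and $0$ otherwise (for other lifts, $P$ is the analogous permutation matrix relating start and end labelings). A nonnegative matrix is primitive if some power has all entries positive. *)

theory Defs
  imports "Jordan_Normal_Form.Spectral_Radius" "HOL-Combinatorics.Permutations"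
begin

(* Alphabet = {1..d} (natural numbers).  A labeled permutation is a pair (pt, pb)
   of permutations of {1..d} (functions permuting {1..d}, identity outside). *)

type_synonym lperm = "(nat \<Rightarrow> nat) \<times> (nat \<Rightarrow> nat)"

definition is_lperm :: "nat \<Rightarrow> lperm \<Rightarrow> bool" where
  "is_lperm d PI \<longleftrightarrow> fst PI permutes {1..d} \<and> snd PI permutes {1..d}"

definition irreducible_lperm :: "nat \<Rightarrow> lperm \<Rightarrow> bool" where
  "irreducible_lperm d PI \<longleftrightarrow>
     (\<forall>k. 1 \<le> k \<and> k < d \<longrightarrow> inv_into UNIV (fst PI) ` {1..k} \<noteq> inv_into UNIV (snd PI) ` {1..k})"

datatype move = Top | Bot

definition insert_after :: "nat \<Rightarrow> nat \<Rightarrow> (nat \<Rightarrow> nat) \<Rightarrow> (nat \<Rightarrow> nat)" where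
  "insert_after d k q = inv_into UNIV (\<lambda>j. if 1 \<le> j \<and> j \<le> d then
        (if j \<le> k then inv_into UNIV q j else if j = k + 1 then inv_into UNIV q d else inv_into UNIV q (j - 1))
      else j)"

fun rauzy :: "nat \<Rightarrow> move \<Rightarrow> lperm \<Rightarrow> lperm" where
  "rauzy d Top (pt, pb) = (pt, insert_after d (pb (inv_into UNIV pt d)) pb)"
| "rauzy d Bot (pt, pb) = (insert_after d (pt (inv_into UNIV pb d)) pt, pb)"

fun winner :: "nat \<Rightarrow> move \<Rightarrow> lperm \<Rightarrow> nat" where
  "winner d Top (pt, pb) = inv_into UNIV pt d"
| "winner d Bot (pt, pb) = inv_into UNIV pb d"

fun loser :: "nat \<Rightarrow> move \<Rightarrow> lperm \<Rightarrow> nat" where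
  "loser d Top (pt, pb) = inv_into UNIV pb d"
| "loser d Bot (pt, pb) = inv_into UNIV pt d"

definition path_end :: "nat \<Rightarrow> lperm \<Rightarrow> move list \<Rightarrow> lperm" where
  "path_end d PI ts = foldl (\<lambda>S t. rauzy d t S) PI ts"

fun path_labels :: "nat \<Rightarrow> lperm \<Rightarrow> move list \<Rightarrow> (nat \<times> nat) list" where
  "path_labels d PI [] = []"
| "path_labels d PI (t # ts) = (winner d t PI, loser d t PI) # path_labels d (rauzy d t PI) ts"

(* reduced permutation pb \<circ> pt^{-1}; a vertex of the reduced Rauzy diagram *)
definition reduce :: "lperm \<Rightarrow> (nat \<Rightarrow> nat)" where
  "reduce PI = snd PI \<circ> inv_into UNIV (fst PI)"

definition in_reduced_rauzy_diagram :: "nat \<Rightarrow> (nat \<Rightarrow> nat) \<Rightarrow> bool" where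
  "in_reduced_rauzy_diagram d p \<longleftrightarrow>
     (\<exists>P0 ts. is_lperm d P0 \<and> irreducible_lperm d P0 \<and> reduce (path_end d P0 ts) = p)"

(* a closed path in the reduced diagram: start vertex p and the sequence of move types;
   the moves of the reduced diagram are images of labeled moves (compatible with relabeling) *)
definition closed_reduced_path :: "nat \<Rightarrow> (nat \<Rightarrow> nat) \<Rightarrow> move list \<Rightarrow> bool" where
  "closed_reduced_path d p ts \<longleftrightarrow>
     p permutes {1..d} \<and> in_reduced_rauzy_diagram d p \<and> reduce (path_end d (id, p) ts) = p"

(* lifts of the reduced path: labeled paths starting at a labeled representative of p *)
definition is_lift_start :: "nat \<Rightarrow> (nat \<Rightarrow> nat) \<Rightarrow> lperm \<Rightarrow> bool" where
  "is_lift_start d p PI \<longleftrightarrow> is_lperm d PI \<and> reduce PI = p"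

(* Matrices: letter i \<in> {1..d} corresponds to row/column index i - 1 *)
definition elem_mat :: "nat \<Rightarrow> nat \<Rightarrow> nat \<Rightarrow> nat mat" where
  "elem_mat d a b = mat d d (\<lambda>(i, j). if i + 1 = a \<and> j + 1 = b then 1 else 0)"

definition Vhat :: "nat \<Rightarrow> (nat \<times> nat) list \<Rightarrow> nat mat" where
  "Vhat d ls = foldl (\<lambda>M (a, b). M * (1\<^sub>m d + elem_mat d a b)) (1\<^sub>m d) ls"

definition perm_matrix :: "nat \<Rightarrow> (nat \<Rightarrow> nat) \<Rightarrow> nat mat" where
  "perm_matrix d pt = mat d d (\<lambda>(i, j). if j + 1 = pt (i + 1) then 1 else 0)"

definition V_mat :: "nat \<Rightarrow> (nat \<Rightarrow> nat) \<Rightarrow> move list \<Rightarrow> nat mat" where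
  "V_mat d p ts = Vhat d (path_labels d (id, p) ts) * perm_matrix d (fst (path_end d (id, p) ts))"

definition primitive_mat :: "nat mat \<Rightarrow> bool" where
  "primitive_mat A \<longleftrightarrow> (\<exists>k. \<forall>i < dim_row A. \<forall>j < dim_col A. (A ^\<^sub>m k) $$ (i, j) > 0)"

(* Perron--Frobenius eigenvalue of a primitive matrix = its spectral radius *)
definition pf_eigenvalue :: "nat mat \<Rightarrow> real" where
  "pf_eigenvalue A = spectral_radius (map_mat of_nat A)"

end

theory Submission
  imports Defs
begin

(* A Rauzy move along an edge with winner a and loser b multiplies the current
   product by I + E_ab, i.e. adds column a to column b; since the product always dominates the
   identity matrix, afterwards column b has sum at least 2 and row a has sum at least 2.  Entries
   never decrease along the path, so if every letter occurs as a loser, every column of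
   Vhat(gamma) has sum at least 2, and if every letter occurs as a winner, every row does.
   Multiplying by the permutation matrix P only permutes the columns, so the same holds for
   V(gamma).  A nonnegative matrix all of whose column sums (or all of whose row sums) are at
   least c has entries of its k-th power of size at least c^k / d, and exponential growth at
   rate c forces spectral radius at least c (otherwise a rescaled matrix of spectral radius < 1
   would have bounded powers). *)

definition col_sum :: "'a :: comm_monoid_add mat \<Rightarrow> nat \<Rightarrow> 'a" where
  "col_sum M j = (\<Sum>i<dim_row M. M $$ (i, j))"

definition row_sum :: "'a :: comm_monoid_add mat \<Rightarrow> nat \<Rightarrow> 'a" where
  "row_sum M i = (\<Sum>j<dim_col M. M $$ (i, j))"

lemma col_sum_one: "j < n \<Longrightarrow> col_sum (1\<^sub>m n :: 'a :: semiring_1 mat) j = 1"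
  unfolding col_sum_def by (simp add: sum.delta' if_distrib cong: if_cong)

lemma row_sum_one: "i < n \<Longrightarrow> row_sum (1\<^sub>m n :: 'a :: semiring_1 mat) i = 1"
  unfolding row_sum_def by (simp add: sum.delta if_distrib cong: if_cong)

lemma col_sum_mult:
  fixes A B :: "'a :: comm_semiring_0 mat"
  assumes "A \<in> carrier_mat n m" and "B \<in> carrier_mat m l" and "j < l"
  shows "col_sum (A * B) j = (\<Sum>r<m. col_sum A r * B $$ (r, j))"
proof -
  have "col_sum (A * B) j = (\<Sum>i<n. \<Sum>r<m. A $$ (i, r) * B $$ (r, j))"
    unfolding col_sum_def using assms by (simp add: scalar_prod_def lessThan_atLeast0)
  also have "\<dots> = (\<Sum>r<m. col_sum A r * B $$ (r, j))"
    unfolding col_sum_def using assms(1) by (subst sum.swap) (simp add: sum_distrib_right)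
  finally show ?thesis .
qed

lemma row_sum_mult:
  fixes A B :: "'a :: comm_semiring_0 mat"
  assumes "A \<in> carrier_mat n m" and "B \<in> carrier_mat m l" and "i < n"
  shows "row_sum (A * B) i = (\<Sum>r<m. A $$ (i, r) * row_sum B r)"
proof -
  have "row_sum (A * B) i = (\<Sum>j<l. \<Sum>r<m. A $$ (i, r) * B $$ (r, j))"
    unfolding row_sum_def using assms by (simp add: scalar_prod_def lessThan_atLeast0)
  also have "\<dots> = (\<Sum>r<m. A $$ (i, r) * row_sum B r)"
    unfolding row_sum_def using assms(2) by (subst sum.swap) (simp add: sum_distrib_left)
  finally show ?thesis .
qed

lemma col_sum_pow_ge:
  fixes V :: "nat mat"
  assumes V: "V \<in> carrier_mat d d" and c: "\<forall>j<d. col_sum V j \<ge> c" and j: "j < d"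
  shows "col_sum (V ^\<^sub>m k) j \<ge> c ^ k"
  using j
proof (induction k arbitrary: j)
  case 0
  then show ?case using V by (simp add: col_sum_one)
next
  case (Suc k)
  have "c ^ Suc k \<le> c ^ k * col_sum V j" using c Suc.prems by (simp add: mult.commute)
  also have "\<dots> = (\<Sum>r<d. c ^ k * V $$ (r, j))"
    using V by (simp add: col_sum_def sum_distrib_left)
  also have "\<dots> \<le> (\<Sum>r<d. col_sum (V ^\<^sub>m k) r * V $$ (r, j))"
    by (intro sum_mono mult_right_mono) (use Suc.IH in auto)
  also have "\<dots> = col_sum (V ^\<^sub>m Suc k) j"
    using col_sum_mult[of "V ^\<^sub>m k" d d V d j] V Suc.prems by simp
  finally show ?case .
qed

lemma row_sum_pow_ge:
  fixes V :: "nat mat"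
  assumes V: "V \<in> carrier_mat d d" and c: "\<forall>i<d. row_sum V i \<ge> c" and i: "i < d"
  shows "row_sum (V ^\<^sub>m k) i \<ge> c ^ k"
  using i
proof (induction k arbitrary: i)
  case 0
  then show ?case using V by (simp add: row_sum_one)
next
  case (Suc k)
  have "c ^ Suc k \<le> row_sum (V ^\<^sub>m k) i * c" using Suc by (simp add: mult.commute)
  also have "\<dots> = (\<Sum>r<d. (V ^\<^sub>m k) $$ (i, r) * c)"
    using V by (simp add: row_sum_def sum_distrib_right)
  also have "\<dots> \<le> (\<Sum>r<d. (V ^\<^sub>m k) $$ (i, r) * row_sum V r)"
    by (intro sum_mono mult_left_mono) (use c in auto)
  also have "\<dots> = row_sum (V ^\<^sub>m Suc k) i"
    using row_sum_mult[of "V ^\<^sub>m k" d d V d i] V Suc.prems by simp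
  finally show ?case .
qed

lemma exists_summand_ge_average:
  fixes f :: "nat \<Rightarrow> nat"
  assumes "d > 0"
  shows "\<exists>j<d. (\<Sum>l<d. f l) \<le> d * f j"
proof -
  have "Max (f ` {..<d}) \<in> f ` {..<d}" using assms by (intro Max_in) auto
  then obtain j where j: "j < d" and "f j = Max (f ` {..<d})" by auto
  then have max: "f l \<le> f j" if "l < d" for l using that by simp
  have "(\<Sum>l<d. f l) \<le> of_nat (card {..<d}) * f j"
    by (rule sum_bounded_above) (use max in auto)
  then show ?thesis using j by auto
qed

lemma eigenvalue_smult_mat:
  assumes A: "A \<in> carrier_mat n n" and ev: "eigenvalue A \<mu>"
  shows "eigenvalue (a \<cdot>\<^sub>m A) (a * \<mu>)"
proof -
  obtain v where v: "v \<in> carrier_vec n" "v \<noteq> 0\<^sub>v n" "A *\<^sub>v v = \<mu> \<cdot>\<^sub>v v"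
    using ev A unfolding eigenvalue_def eigenvector_def by auto
  have "(a \<cdot>\<^sub>m A) *\<^sub>v v = (a * \<mu>) \<cdot>\<^sub>v v"
  proof (rule eq_vecI)
    fix i assume "i < dim_vec ((a * \<mu>) \<cdot>\<^sub>v v)"
    then have i: "i < n" using v(1) by simp
    have "row A i \<bullet> v = \<mu> * v $ i"
      using arg_cong[OF v(3), of "\<lambda>w. w $ i"] i A v(1) by simp
    then show "((a \<cdot>\<^sub>m A) *\<^sub>v v) $ i = ((a * \<mu>) \<cdot>\<^sub>v v) $ i"
      using i A v(1) by simp
  qed (use A v(1) in simp)
  then show ?thesis
    using v A unfolding eigenvalue_def eigenvector_def by auto
qed

lemma spectral_radius_smult_le:
  assumes A: "A \<in> carrier_mat n n" and n: "n > 0" and a: "a \<noteq> 0"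
  shows "spectral_radius (a \<cdot>\<^sub>m A) \<le> cmod a * spectral_radius A"
proof -
  have aA: "a \<cdot>\<^sub>m A \<in> carrier_mat n n" using A by simp
  obtain \<mu> where \<mu>: "eigenvalue (a \<cdot>\<^sub>m A) \<mu>" and sr: "spectral_radius (a \<cdot>\<^sub>m A) = cmod \<mu>"
    using spectral_radius_mem_max(1)[OF aA n] unfolding spectrum_def by auto
  have "inverse a \<cdot>\<^sub>m (a \<cdot>\<^sub>m A) = A" using A a by (auto intro!: eq_matI)
  then have "eigenvalue A (inverse a * \<mu>)"
    using eigenvalue_smult_mat[OF aA \<mu>, of "inverse a"] by simp
  then have "cmod (inverse a * \<mu>) \<le> spectral_radius A"
    by (intro spectral_radius_mem_max(2)[OF A n]) (simp add: spectrum_def)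
  moreover have "cmod \<mu> = cmod a * cmod (inverse a * \<mu>)"
    using a by (simp add: norm_mult norm_inverse)
  ultimately show ?thesis
    unfolding sr by (simp add: mult_left_mono)
qed

lemma pow_smult_mat:
  fixes A :: "'a :: comm_ring_1 mat"
  assumes A: "A \<in> carrier_mat n n"
  shows "(a \<cdot>\<^sub>m A) ^\<^sub>m k = (a ^ k) \<cdot>\<^sub>m (A ^\<^sub>m k)"
proof (induction k)
  case (Suc k)
  have "(a \<cdot>\<^sub>m A) ^\<^sub>m Suc k = (a ^ k \<cdot>\<^sub>m A ^\<^sub>m k) * (a \<cdot>\<^sub>m A)" using Suc by simp
  also have "\<dots> = a ^ k \<cdot>\<^sub>m (A ^\<^sub>m k * (a \<cdot>\<^sub>m A))"
    using A by (simp add: mult_smult_assoc_mat[of _ n n _ n])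
  also have "\<dots> = a ^ k \<cdot>\<^sub>m (a \<cdot>\<^sub>m (A ^\<^sub>m k * A))"
    using A by (simp add: mult_smult_distrib[of _ n n _ n])
  also have "\<dots> = (a ^ Suc k) \<cdot>\<^sub>m (A ^\<^sub>m Suc k)"
    by (auto intro!: eq_matI simp: ac_simps)
  finally show ?case .
qed (use A in \<open>auto intro!: eq_matI\<close>)

lemma map_mat_of_nat_pow:
  fixes V :: "nat mat"
  assumes "V \<in> carrier_mat n n"
  shows "map_mat (of_nat :: nat \<Rightarrow> complex) (V ^\<^sub>m k) = (map_mat of_nat V) ^\<^sub>m k"
proof -
  interpret of_nat_hom: semiring_hom "of_nat :: nat \<Rightarrow> complex" by unfold_locales auto
  show ?thesis using of_nat_hom.mat_hom_pow[OF assms] .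
qed

(* If the powers of a nonnegative integer matrix have entries of size at least r^k / C, then
   its spectral radius is at least r: otherwise, for some c with spectral radius < c < r, the
   matrix scaled by 1/c has spectral radius < 1 and hence bounded powers, while its entries grow
   like (r/c)^k. *)
lemma spectral_radius_ge_of_growth:
  fixes V :: "nat mat" and r C :: real
  assumes V: "V \<in> carrier_mat d d" and d: "d > 0" and C: "C \<ge> 0"
    and grow: "\<And>k. \<exists>i<d. \<exists>j<d. r ^ k \<le> C * real ((V ^\<^sub>m k) $$ (i, j))"
  shows "spectral_radius (map_mat of_nat V) \<ge> r"
proof (rule ccontr)
  define A where "A = map_mat (of_nat :: nat \<Rightarrow> complex) V"
  have A: "A \<in> carrier_mat d d" using V unfolding A_def by simp
  assume "\<not> r \<le> spectral_radius (map_mat of_nat V)"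
  then have lt: "spectral_radius A < r" unfolding A_def by simp
  have "spectral_radius A \<ge> 0" using spectral_radius_mem_max(1)[OF A d] by auto
  then obtain c where c: "0 < c" "spectral_radius A < c" "c < r"
    using lt by (intro that[of "(spectral_radius A + r) / 2"]) auto
  define B where "B = complex_of_real (1 / c) \<cdot>\<^sub>m A"
  have B: "B \<in> carrier_mat d d" using A unfolding B_def by simp
  have "spectral_radius B \<le> (1 / c) * spectral_radius A"
    using spectral_radius_smult_le[OF A d, of "complex_of_real (1 / c)"] c(1)
    unfolding B_def by (simp add: norm_divide)
  also have "\<dots> < 1" using c by (simp add: field_simps)
  finally obtain K where K: "\<And>k. norm_bound (B ^\<^sub>m k) K"
    using spectral_radius_jnf_norm_bound_less_1_upper_triangular[OF B] by auto
  have bounded: "(r / c) ^ k \<le> C * K" for k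
  proof -
    obtain i j where ij: "i < d" "j < d" and g: "r ^ k \<le> C * real ((V ^\<^sub>m k) $$ (i, j))"
      using grow by blast
    have "B ^\<^sub>m k = complex_of_real (1 / c) ^ k \<cdot>\<^sub>m A ^\<^sub>m k"
      unfolding B_def by (rule pow_smult_mat[OF A])
    also have "A ^\<^sub>m k = map_mat of_nat (V ^\<^sub>m k)"
      unfolding A_def by (rule map_mat_of_nat_pow[OF V, symmetric])
    finally have "(B ^\<^sub>m k) $$ (i, j) = complex_of_real ((1 / c) ^ k * real ((V ^\<^sub>m k) $$ (i, j)))"
      using ij V by simp
    moreover have "norm ((B ^\<^sub>m k) $$ (i, j)) \<le> K"
      using K[of k] ij B unfolding norm_bound_def by auto
    ultimately have "(1 / c) ^ k * real ((V ^\<^sub>m k) $$ (i, j)) \<le> K"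
      using c(1) by (simp add: norm_mult norm_power norm_divide)
    then have "C * ((1 / c) ^ k * real ((V ^\<^sub>m k) $$ (i, j))) \<le> C * K"
      using C by (rule mult_left_mono)
    moreover have "(r / c) ^ k \<le> (1 / c) ^ k * (C * real ((V ^\<^sub>m k) $$ (i, j)))"
      using g c(1) by (simp add: power_divide divide_right_mono)
    ultimately show ?thesis by (simp add: ac_simps)
  qed
  obtain k where "C * K < (r / c) ^ k" using real_arch_pow[of "r / c" "C * K"] c by auto
  with bounded[of k] show False by simp
qed

lemma spectral_radius_ge_of_line_sums:
  fixes V :: "nat mat"
  assumes V: "V \<in> carrier_mat d d" and d: "d > 0"
    and sums: "(\<forall>j<d. col_sum V j \<ge> c) \<or> (\<forall>i<d. row_sum V i \<ge> c)"
  shows "spectral_radius (map_mat of_nat V) \<ge> real c"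
proof (rule spectral_radius_ge_of_growth[OF V d, of "real d"])
  fix k
  have "\<exists>i<d. \<exists>j<d. c ^ k \<le> d * (V ^\<^sub>m k) $$ (i, j)"
    using sums
  proof
    assume "\<forall>j<d. col_sum V j \<ge> c"
    then have "c ^ k \<le> col_sum (V ^\<^sub>m k) 0" using col_sum_pow_ge[OF V] d by blast
    moreover obtain i where "i < d" "col_sum (V ^\<^sub>m k) 0 \<le> d * (V ^\<^sub>m k) $$ (i, 0)"
      using exists_summand_ge_average[OF d, of "\<lambda>i. (V ^\<^sub>m k) $$ (i, 0)"] V
      unfolding col_sum_def by auto
    ultimately show ?thesis using d by (meson order_trans)
  next
    assume "\<forall>i<d. row_sum V i \<ge> c"
    then have "c ^ k \<le> row_sum (V ^\<^sub>m k) 0" using row_sum_pow_ge[OF V] d by blast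
    moreover obtain j where "j < d" "row_sum (V ^\<^sub>m k) 0 \<le> d * (V ^\<^sub>m k) $$ (0, j)"
      using exists_summand_ge_average[OF d, of "\<lambda>j. (V ^\<^sub>m k) $$ (0, j)"]
        carrier_matD[OF pow_carrier_mat[OF V]]
      unfolding row_sum_def by auto
    ultimately show ?thesis using d by (meson order_trans)
  qed
  then show "\<exists>i<d. \<exists>j<d. real c ^ k \<le> real d * real ((V ^\<^sub>m k) $$ (i, j))"
    by (metis of_nat_le_iff of_nat_mult of_nat_power)
qed simp

lemma elem_step_entry:
  assumes M: "M \<in> carrier_mat d d" and a: "a \<in> {1..d}" and ij: "i < d" "j < d"
  shows "(M * (1\<^sub>m d + elem_mat d a b)) $$ (i, j)
           = M $$ (i, j) + (if j + 1 = b then M $$ (i, a - 1) else 0)"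
proof -
  have "(M * (1\<^sub>m d + elem_mat d a b)) $$ (i, j) =
     (\<Sum>l<d. M $$ (i, l) * ((if l = j then 1 else 0) + (if l + 1 = a \<and> j + 1 = b then 1 else 0)))"
    using M ij by (simp add: scalar_prod_def elem_mat_def lessThan_atLeast0)
  also have "\<dots> = (\<Sum>l<d. if l = j then M $$ (i, l) else 0)
                   + (\<Sum>l<d. if l = a - 1 then (if j + 1 = b then M $$ (i, l) else 0) else 0)"
    unfolding sum.distrib[symmetric] by (rule sum.cong) (use a in auto)
  also have "\<dots> = M $$ (i, j) + (if j + 1 = b then M $$ (i, a - 1) else 0)"
    using ij a by (auto simp: sum.delta')
  finally show ?thesis .
qed

lemma Vhat_snoc: "Vhat d (L @ [(a, b)]) = Vhat d L * (1\<^sub>m d + elem_mat d a b)"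
  unfolding Vhat_def by simp

lemma Vhat_carrier: "Vhat d L \<in> carrier_mat d d"
  by (induction L rule: rev_induct) (auto simp: Vhat_def elem_mat_def)

lemma Vhat_append_mono:
  assumes "set L' \<subseteq> {1..d} \<times> {1..d}" and "i < d" "j < d"
  shows "Vhat d L $$ (i, j) \<le> Vhat d (L @ L') $$ (i, j)"
  using assms(1)
proof (induction L' rule: rev_induct)
  case (snoc x L')
  obtain a b where x: "x = (a, b)" by force
  have "a \<in> {1..d}" using snoc.prems x by auto
  then show ?case
    using snoc elem_step_entry[OF Vhat_carrier _ assms(2,3)]
    by (simp add: x Vhat_snoc flip: append_assoc)
qed simp

lemma Vhat_diag:
  assumes "set L \<subseteq> {1..d} \<times> {1..d}" and "i < d"
  shows "1 \<le> Vhat d L $$ (i, i)"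
  using Vhat_append_mono[OF assms(1), of i i "[]"] assms(2) by (simp add: Vhat_def)

(* Right after an edge with winner a and loser b, column b has sum at least 2 (it received
   column a, and both columns contain a diagonal entry at least 1), and row a has sum at least 2
   (its diagonal entry was copied into column b). *)
lemma Vhat_snoc_line_sums:
  assumes L: "set L \<subseteq> {1..d} \<times> {1..d}" and a: "a \<in> {1..d}" and b: "b \<in> {1..d}"
  shows "2 \<le> col_sum (Vhat d (L @ [(a, b)])) (b - 1)"
    and "2 \<le> row_sum (Vhat d (L @ [(a, b)])) (a - 1)"
proof -
  define M where "M = Vhat d L"
  have M: "M \<in> carrier_mat d d" unfolding M_def by (rule Vhat_carrier)
  have ent: "Vhat d (L @ [(a, b)]) $$ (i, j) = M $$ (i, j) + (if j + 1 = b then M $$ (i, a - 1) else 0)"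
    if "i < d" "j < d" for i j
    unfolding M_def Vhat_snoc using elem_step_entry[OF Vhat_carrier a that] .
  have idx: "a - 1 < d" "b - 1 < d" using a b by auto
  have diag: "1 \<le> M $$ (a - 1, a - 1)" "1 \<le> M $$ (b - 1, b - 1)"
    unfolding M_def using Vhat_diag[OF L] idx by auto
  have "col_sum (Vhat d (L @ [(a, b)])) (b - 1) = (\<Sum>i<d. M $$ (i, b - 1) + M $$ (i, a - 1))"
    unfolding col_sum_def using Vhat_carrier[of d] b by (intro sum.cong) (auto simp: ent)
  also have "\<dots> = col_sum M (b - 1) + col_sum M (a - 1)"
    using M by (simp add: col_sum_def sum.distrib)
  also have "\<dots> \<ge> M $$ (b - 1, b - 1) + M $$ (a - 1, a - 1)"
    unfolding col_sum_def using M idx by (intro add_mono member_le_sum) auto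
  finally show "2 \<le> col_sum (Vhat d (L @ [(a, b)])) (b - 1)" using diag by simp
  have "row_sum (Vhat d (L @ [(a, b)])) (a - 1)
          = (\<Sum>j<d. M $$ (a - 1, j) + (if j = b - 1 then M $$ (a - 1, a - 1) else 0))"
    unfolding row_sum_def using Vhat_carrier[of d] idx b by (intro sum.cong) (auto simp: ent)
  also have "\<dots> = row_sum M (a - 1) + M $$ (a - 1, a - 1)"
    using M idx by (simp add: row_sum_def sum.distrib sum.delta')
  also have "\<dots> \<ge> M $$ (a - 1, a - 1) + M $$ (a - 1, a - 1)"
    unfolding row_sum_def using M idx by (intro add_mono member_le_sum) auto
  finally show "2 \<le> row_sum (Vhat d (L @ [(a, b)])) (a - 1)" using diag by simp
qed

lemma Vhat_line_sums:
  assumes L: "set L \<subseteq> {1..d} \<times> {1..d}" and ab: "(a, b) \<in> set L"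
  shows "2 \<le> col_sum (Vhat d L) (b - 1)" and "2 \<le> row_sum (Vhat d L) (a - 1)"
proof -
  obtain L1 L2 where split: "L = (L1 @ [(a, b)]) @ L2"
    using split_list[OF ab] by auto
  have range: "set L1 \<subseteq> {1..d} \<times> {1..d}" "set L2 \<subseteq> {1..d} \<times> {1..d}"
    "a \<in> {1..d}" "b \<in> {1..d}" using L unfolding split by auto
  have mono: "Vhat d (L1 @ [(a, b)]) $$ (i, j) \<le> Vhat d L $$ (i, j)" if "i < d" "j < d" for i j
    unfolding split using Vhat_append_mono[OF range(2) that] .
  have "2 \<le> col_sum (Vhat d (L1 @ [(a, b)])) (b - 1)"
    using Vhat_snoc_line_sums(1)[OF range(1,3,4)] .
  also have "\<dots> \<le> col_sum (Vhat d L) (b - 1)"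
    unfolding col_sum_def using carrier_matD[OF Vhat_carrier, of d] range(4)
    by (auto intro!: sum_mono mono)
  finally show "2 \<le> col_sum (Vhat d L) (b - 1)" .
  have "2 \<le> row_sum (Vhat d (L1 @ [(a, b)])) (a - 1)"
    using Vhat_snoc_line_sums(2)[OF range(1,3,4)] .
  also have "\<dots> \<le> row_sum (Vhat d L) (a - 1)"
    unfolding row_sum_def using carrier_matD[OF Vhat_carrier, of d] range(3)
    by (auto intro!: sum_mono mono)
  finally show "2 \<le> row_sum (Vhat d L) (a - 1)" .
qed

lemma perm_matrix_entry:
  assumes W: "W \<in> carrier_mat d d" and q: "q permutes {1..d}" and ij: "i < d" "j < d"
  shows "(W * perm_matrix d q) $$ (i, j) = W $$ (i, inv_into UNIV q (j + 1) - 1)"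
proof -
  define l0 where "l0 = inv_into UNIV q (j + 1) - 1"
  have l0: "inv_into UNIV q (j + 1) = l0 + 1" "l0 < d"
    using permutes_in_image[OF permutes_inv[OF q], of "j + 1"] ij unfolding l0_def by auto
  have hit: "(j + 1 = q (l + 1)) = (l = l0)" for l
    using permutes_inv_eq[OF q, of "j + 1" "l + 1"] l0(1) by auto
  have "(W * perm_matrix d q) $$ (i, j)
          = (\<Sum>l<d. W $$ (i, l) * (if j + 1 = q (l + 1) then 1 else 0))"
    using W ij by (simp add: scalar_prod_def perm_matrix_def lessThan_atLeast0)
  also have "\<dots> = (\<Sum>l<d. if l = l0 then W $$ (i, l) else 0)"
    by (rule sum.cong) (simp_all only: hit, simp)
  also have "\<dots> = W $$ (i, l0)" using l0(2) by simp
  finally show ?thesis unfolding l0_def .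
qed

lemma perm_matrix_column_bij:
  assumes q: "q permutes {1..(d :: nat)}"
  shows "bij_betw (\<lambda>j. inv_into UNIV q (j + 1) - 1) {..<d} {..<d}"
proof (rule bij_betw_byWitness[where f' = "\<lambda>l. q (l + 1) - 1"])
  have inv_range: "inv_into UNIV q (j + 1) \<in> {1..d}" if "j < d" for j
    using permutes_in_image[OF permutes_inv[OF q], of "j + 1"] that by simp
  have range: "q (l + 1) \<in> {1..d}" if "l < d" for l
    using permutes_in_image[OF q, of "l + 1"] that by simp
  show "\<forall>j\<in>{..<d}. q (inv_into UNIV q (j + 1) - 1 + 1) - 1 = j"
  proof
    fix j assume "j \<in> {..<d}"
    then have "inv_into UNIV q (j + 1) - 1 + 1 = inv_into UNIV q (j + 1)" using inv_range[of j] by simp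
    then show "q (inv_into UNIV q (j + 1) - 1 + 1) - 1 = j" using permutes_inverses(1)[OF q] by simp
  qed
  show "\<forall>l\<in>{..<d}. inv_into UNIV q (q (l + 1) - 1 + 1) - 1 = l"
  proof
    fix l assume "l \<in> {..<d}"
    then have "q (l + 1) - 1 + 1 = q (l + 1)" using range[of l] by simp
    then show "inv_into UNIV q (q (l + 1) - 1 + 1) - 1 = l" using permutes_inverses(2)[OF q] by simp
  qed
  show "(\<lambda>j. inv_into UNIV q (j + 1) - 1) ` {..<d} \<subseteq> {..<d}" using inv_range by force
  show "(\<lambda>l. q (l + 1) - 1) ` {..<d} \<subseteq> {..<d}" using range by force
qed

lemma perm_matrix_line_sums:
  assumes W: "W \<in> carrier_mat d d" and q: "q permutes {1..d}"
  shows "j < d \<Longrightarrow> col_sum (W * perm_matrix d q) j = col_sum W (inv_into UNIV q (j + 1) - 1)"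
    and "i < d \<Longrightarrow> row_sum (W * perm_matrix d q) i = row_sum W i"
proof -
  have P: "perm_matrix d q \<in> carrier_mat d d" by (simp add: perm_matrix_def)
  show "j < d \<Longrightarrow> col_sum (W * perm_matrix d q) j = col_sum W (inv_into UNIV q (j + 1) - 1)"
    unfolding col_sum_def using W P perm_matrix_entry[OF W q] by (intro sum.cong) auto
  assume i: "i < d"
  have "row_sum (W * perm_matrix d q) i = (\<Sum>j<d. W $$ (i, inv_into UNIV q (j + 1) - 1))"
    unfolding row_sum_def using W P i perm_matrix_entry[OF W q] by (intro sum.cong) auto
  also have "\<dots> = row_sum W i"
    unfolding row_sum_def
    using W sum.reindex_bij_betw[OF perm_matrix_column_bij[OF q], of "\<lambda>l. W $$ (i, l)"] by simp
  finally show "row_sum (W * perm_matrix d q) i = row_sum W i" .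
qed

(* The cyclic permutation cyc d k of positions {1..d} fixes 1..k, sends k+1 to d
   and shifts the positions k+2..d down by one; a Rauzy move reinserts the last letter of one
   row right after position k, i.e. it composes that row with the inverse of cyc d k. *)
definition cyc :: "nat \<Rightarrow> nat \<Rightarrow> nat \<Rightarrow> nat" where
  "cyc d k j = (if 1 \<le> j \<and> j \<le> d then (if j \<le> k then j else if j = k + 1 then d else j - 1) else j)"

lemma cyc_permutes:
  assumes "k \<le> d"
  shows "cyc d k permutes {1..d}"
proof (rule bij_imp_permutes)
  define cyc' where
    "cyc' j = (if 1 \<le> j \<and> j \<le> d then (if j \<le> k then j else if j = d then k + 1 else j + 1) else j)"
    for j
  show "bij_betw (cyc d k) {1..d} {1..d}"
    by (rule bij_betw_byWitness[where f' = cyc']) (use assms in \<open>auto simp: cyc_def cyc'_def\<close>)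
qed (simp add: cyc_def)

lemma insert_after_eq:
  assumes q: "q permutes {1..d}" and k: "k \<le> d"
  shows "insert_after d k q = inv_into UNIV (cyc d k) \<circ> q"
proof -
  have iq: "inv_into UNIV q permutes {1..d}" using permutes_inv[OF q] .
  have "insert_after d k q = inv_into UNIV (inv_into UNIV q \<circ> cyc d k)"
    unfolding insert_after_def
    by (rule arg_cong[where f = "inv_into UNIV"]) (use permutes_not_in[OF iq] in \<open>auto simp: fun_eq_iff cyc_def\<close>)
  also have "\<dots> = inv_into UNIV (cyc d k) \<circ> inv_into UNIV (inv_into UNIV q)"
    by (rule o_inv_distrib) (use permutes_bij[OF cyc_permutes[OF k]] permutes_bij[OF iq] in auto)
  also have "\<dots> = inv_into UNIV (cyc d k) \<circ> q" using permutes_inv_inv[OF q] by simp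
  finally show ?thesis .
qed

lemma lperm_positions:
  assumes "is_lperm d (pt, pb)" and "1 \<le> d"
  shows "inv_into UNIV pt d \<in> {1..d}" and "inv_into UNIV pb d \<in> {1..d}"
    and "pb (inv_into UNIV pt d) \<in> {1..d}" and "pt (inv_into UNIV pb d) \<in> {1..d}"
proof -
  have pt: "pt permutes {1..d}" and pb: "pb permutes {1..d}"
    using assms(1) unfolding is_lperm_def by auto
  show last: "inv_into UNIV pt d \<in> {1..d}" "inv_into UNIV pb d \<in> {1..d}"
    using assms(2) permutes_in_image[OF permutes_inv[OF pt]] permutes_in_image[OF permutes_inv[OF pb]]
    by auto
  show "pb (inv_into UNIV pt d) \<in> {1..d}" and "pt (inv_into UNIV pb d) \<in> {1..d}"
    using last permutes_in_image[OF pb] permutes_in_image[OF pt] by auto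
qed

lemma rauzy_eq:
  assumes "is_lperm d (pt, pb)" and "1 \<le> d"
  shows "rauzy d Top (pt, pb) = (pt, inv_into UNIV (cyc d (pb (inv_into UNIV pt d))) \<circ> pb)"
    and "rauzy d Bot (pt, pb) = (inv_into UNIV (cyc d (pt (inv_into UNIV pb d))) \<circ> pt, pb)"
  using lperm_positions(3,4)[OF assms] assms(1) unfolding is_lperm_def
  by (auto simp: insert_after_eq)

lemma rauzy_lperm:
  assumes "is_lperm d PI" and "1 \<le> d"
  shows "is_lperm d (rauzy d t PI)"
proof -
  obtain pt pb where PI: "PI = (pt, pb)" by force
  have l: "is_lperm d (pt, pb)" using assms(1) PI by simp
  note pointers = lperm_positions(3,4)[OF l assms(2)]
  have "inv_into UNIV (cyc d (pb (inv_into UNIV pt d))) permutes {1..d}"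
    by (intro permutes_inv cyc_permutes) (use pointers in auto)
  moreover have "inv_into UNIV (cyc d (pt (inv_into UNIV pb d))) permutes {1..d}"
    by (intro permutes_inv cyc_permutes) (use pointers in auto)
  ultimately show ?thesis
    using l unfolding PI is_lperm_def by (cases t) (auto simp: rauzy_eq[OF l assms(2)] permutes_compose simp del: rauzy.simps)
qed

(* Renaming the letters of a labeled permutation by a permutation s of the alphabet (the new
   name of letter s x is x). *)
definition relabel :: "(nat \<Rightarrow> nat) \<Rightarrow> lperm \<Rightarrow> lperm" where
  "relabel s PI = (fst PI \<circ> s, snd PI \<circ> s)"

lemma rauzy_relabel:
  assumes l: "is_lperm d PI" and d: "1 \<le> d" and s: "s permutes {1..d}"
  shows "rauzy d t (relabel s PI) = relabel s (rauzy d t PI)"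
    and "winner d t (relabel s PI) = inv_into UNIV s (winner d t PI)"
    and "loser d t (relabel s PI) = inv_into UNIV s (loser d t PI)"
proof -
  obtain pt pb where PI: "PI = (pt, pb)" by force
  have l0: "is_lperm d (pt, pb)" using l PI by simp
  have l1: "is_lperm d (pt \<circ> s, pb \<circ> s)"
    using l0 s unfolding is_lperm_def by (auto intro: permutes_compose)
  have inv_comp: "inv_into UNIV (pt \<circ> s) = inv_into UNIV s \<circ> inv_into UNIV pt" "inv_into UNIV (pb \<circ> s) = inv_into UNIV s \<circ> inv_into UNIV pb"
    using l0 s unfolding is_lperm_def by (auto intro!: o_inv_distrib permutes_bij)
  have "s (inv_into UNIV s x) = x" for x using permutes_inverses(1)[OF s] .
  then show "rauzy d t (relabel s PI) = relabel s (rauzy d t PI)"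
    unfolding PI relabel_def
    by (cases t) (simp_all only: fst_conv snd_conv rauzy_eq[OF l0 d] rauzy_eq[OF l1 d], simp_all add: inv_comp comp_assoc)
  show "winner d t (relabel s PI) = inv_into UNIV s (winner d t PI)"
    and "loser d t (relabel s PI) = inv_into UNIV s (loser d t PI)"
    unfolding PI relabel_def by (cases t; simp add: inv_comp)+
qed

lemma path_labels_relabel:
  assumes "is_lperm d PI" and "1 \<le> d" and "s permutes {1..d}"
  shows "path_labels d (relabel s PI) ts = map (map_prod (inv_into UNIV s) (inv_into UNIV s)) (path_labels d PI ts)"
  using assms(1)
proof (induction ts arbitrary: PI)
  case (Cons t ts)
  then show ?case
    using rauzy_relabel[OF Cons.prems assms(2,3)] rauzy_lperm[OF Cons.prems assms(2)] by simp
qed simp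

lemma path_labels_letters:
  assumes "is_lperm d PI" and "1 \<le> d"
  shows "set (path_labels d PI ts) \<subseteq> {1..d} \<times> {1..d}"
  using assms(1)
proof (induction ts arbitrary: PI)
  case (Cons t ts)
  obtain pt pb where PI: "PI = (pt, pb)" by force
  have "winner d t PI \<in> {1..d}" and "loser d t PI \<in> {1..d}"
    using lperm_positions(1,2)[OF Cons.prems[unfolded PI] assms(2)] unfolding PI by (cases t; simp)+
  then show ?case using Cons.IH[OF rauzy_lperm[OF Cons.prems assms(2)]] by simp
qed simp

lemma path_end_lperm:
  assumes "is_lperm d PI" and "1 \<le> d"
  shows "is_lperm d (path_end d PI ts)"
  using assms(1) unfolding path_end_def
proof (induction ts arbitrary: PI)
  case (Cons t ts)
  then show ?case using Cons.IH[OF rauzy_lperm[OF Cons.prems assms(2)]] by simp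
qed simp

(* Every lift of a reduced path is a renaming of the lift starting at (Id, p), the one used to
   define V(gamma); its winner/loser sequence is obtained by renaming the letters by pt. *)
lemma standard_lift_labels:
  assumes "is_lift_start d p PI" and "1 \<le> d"
  shows "path_labels d (id, p) ts = map (map_prod (fst PI) (fst PI)) (path_labels d PI ts)"
proof -
  obtain pt pb where PI: "PI = (pt, pb)" by force
  have l: "is_lperm d (pt, pb)" and p: "pb \<circ> inv_into UNIV pt = p"
    using assms(1) unfolding PI is_lift_start_def reduce_def by auto
  have pt: "pt permutes {1..d}" using l unfolding is_lperm_def by simp
  have "relabel (inv_into UNIV pt) PI = (id, p)"
    using permutes_inv_o(1)[OF pt] p unfolding PI relabel_def by simp
  then show ?thesis
    using path_labels_relabel[OF l assms(2) permutes_inv[OF pt], of ts] permutes_inv_inv[OF pt]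
    unfolding PI by simp
qed

lemma standard_lift_covers:
  assumes lift: "is_lift_start d p PI" and d: "1 \<le> d"
  shows "\<forall>c \<in> {1..d}. c \<in> snd ` set (path_labels d PI ts) \<Longrightarrow>
           \<forall>c \<in> {1..d}. c \<in> snd ` set (path_labels d (id, p) ts)"
    and "\<forall>c \<in> {1..d}. c \<in> fst ` set (path_labels d PI ts) \<Longrightarrow>
           \<forall>c \<in> {1..d}. c \<in> fst ` set (path_labels d (id, p) ts)"
proof -
  have pt: "fst PI permutes {1..d}" using lift unfolding is_lift_start_def is_lperm_def by simp
  have renamed: "{1..d} \<subseteq> fst PI ` A" if "\<forall>c \<in> {1..d}. c \<in> A" for A
  proof -
    have "{1..d} = fst PI ` {1..d}" using permutes_image[OF pt] by simp
    also have "\<dots> \<subseteq> fst PI ` A" using that by (intro image_mono) auto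
    finally show ?thesis .
  qed
  have "snd ` set (path_labels d (id, p) ts) = fst PI ` snd ` set (path_labels d PI ts)"
    and "fst ` set (path_labels d (id, p) ts) = fst PI ` fst ` set (path_labels d PI ts)"
    unfolding standard_lift_labels[OF lift d] by (simp_all add: image_image)
  with renamed show "\<forall>c \<in> {1..d}. c \<in> snd ` set (path_labels d PI ts) \<Longrightarrow>
           \<forall>c \<in> {1..d}. c \<in> snd ` set (path_labels d (id, p) ts)"
    and "\<forall>c \<in> {1..d}. c \<in> fst ` set (path_labels d PI ts) \<Longrightarrow>
           \<forall>c \<in> {1..d}. c \<in> fst ` set (path_labels d (id, p) ts)"
    by (simp_all add: subset_eq)
qed

lemma V_mat_line_sums:
  assumes p: "p permutes {1..d}" and d: "1 \<le> d"
  shows "\<forall>c \<in> {1..d}. c \<in> snd ` set (path_labels d (id, p) ts) \<Longrightarrow>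
           \<forall>j<d. 2 \<le> col_sum (V_mat d p ts) j"
    and "\<forall>c \<in> {1..d}. c \<in> fst ` set (path_labels d (id, p) ts) \<Longrightarrow>
           \<forall>i<d. 2 \<le> row_sum (V_mat d p ts) i"
proof -
  have l: "is_lperm d (id, p)" using p unfolding is_lperm_def by simp
  define L where "L = path_labels d (id, p) ts"
  define q where "q = fst (path_end d (id, p) ts)"
  have L: "set L \<subseteq> {1..d} \<times> {1..d}" unfolding L_def by (rule path_labels_letters[OF l d])
  have q: "q permutes {1..d}"
    using path_end_lperm[OF l d, of ts] unfolding q_def is_lperm_def by simp
  have V: "V_mat d p ts = Vhat d L * perm_matrix d q" unfolding V_mat_def L_def q_def ..
  note sums = perm_matrix_line_sums[OF Vhat_carrier[of d L] q]
  show "\<forall>j<d. 2 \<le> col_sum (V_mat d p ts) j"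
    if losers: "\<forall>c \<in> {1..d}. c \<in> snd ` set (path_labels d (id, p) ts)"
  proof (intro allI impI)
    fix j assume j: "j < d"
    have "inv_into UNIV q (j + 1) \<in> {1..d}" using permutes_in_image[OF permutes_inv[OF q]] j by simp
    then obtain a where "(a, inv_into UNIV q (j + 1)) \<in> set L" using losers unfolding L_def by force
    then show "2 \<le> col_sum (V_mat d p ts) j" using Vhat_line_sums(1)[OF L] sums(1)[OF j] V by simp
  qed
  show "\<forall>i<d. 2 \<le> row_sum (V_mat d p ts) i"
    if winners: "\<forall>c \<in> {1..d}. c \<in> fst ` set (path_labels d (id, p) ts)"
  proof (intro allI impI)
    fix i assume i: "i < d"
    then obtain b where "(i + 1, b) \<in> set L" using winners unfolding L_def by force
    then show "2 \<le> row_sum (V_mat d p ts) i" using Vhat_line_sums(2)[OF L] sums(2)[OF i] V by force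
  qed
qed

theorem proposition4p2:
  fixes d :: nat and p :: "nat \<Rightarrow> nat" and ts :: "move list"
  assumes "d \<ge> 2"
    and "closed_reduced_path d p ts"
    and "primitive_mat (V_mat d p ts)"
    and "\<exists>PI. is_lift_start d p PI \<and>
           ((\<forall>c \<in> {1..d}. c \<in> snd ` set (path_labels d PI ts)) \<or>
            (\<forall>c \<in> {1..d}. c \<in> fst ` set (path_labels d PI ts)))"
  shows "pf_eigenvalue (V_mat d p ts) \<ge> 2"
proof -
  have d: "1 \<le> d" using assms(1) by simp
  have p: "p permutes {1..d}" using assms(2) unfolding closed_reduced_path_def by simp
  obtain PI where lift: "is_lift_start d p PI"
    and covers: "(\<forall>c \<in> {1..d}. c \<in> snd ` set (path_labels d PI ts)) \<or>
                 (\<forall>c \<in> {1..d}. c \<in> fst ` set (path_labels d PI ts))"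
    using assms(4) by blast
  then have "(\<forall>c \<in> {1..d}. c \<in> snd ` set (path_labels d (id, p) ts)) \<or>
             (\<forall>c \<in> {1..d}. c \<in> fst ` set (path_labels d (id, p) ts))"
    using standard_lift_covers[OF lift d] by blast
  then have "(\<forall>j<d. 2 \<le> col_sum (V_mat d p ts) j) \<or> (\<forall>i<d. 2 \<le> row_sum (V_mat d p ts) i)"
    using V_mat_line_sums[OF p d] by blast
  moreover have "V_mat d p ts \<in> carrier_mat d d"
    unfolding V_mat_def by (rule mult_carrier_mat[OF Vhat_carrier]) (simp add: perm_matrix_def)
  ultimately show ?thesis
    unfolding pf_eigenvalue_def using spectral_radius_ge_of_line_sums[of _ d 2] d by simp
qed

end
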